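(* Let $N\ge2$, $z=(z_1,\dots,z_N)\in\mathcal P_d^N$, and let $x=(x^i_j)_{1\le j\le i\le N}$ be any critical point of $\Phi^N$ restricted to the set of height-$N$ triangular arrays with $N$-th row equal to $z$ (viewed as a function of the free variables $x^i_j$, $1\le j\le i\le N-1$). Set $p_i=|x^i_1\cdots x^i_i|$. Then $$p_1=p_2^{1/2}=\dots=p_{N-1}^{1/(N-1)}=p_N^{1/N}=|z_1\cdots z_N|^{1/N}.$$
   Context: $\mathcal P_d$: $d\times d$ real symmetric positive definite matrices (an open subset of the space of symmetric matrices); $|\cdot|$ determinant. For a height-$N$ triangular array $x=(x^i_j)_{1\le j\le i\le N}$ with $x^i_j\in\mathcal P_d$, $\Phi^N(x)=\sum_{i=1}^{N-1}\sum_{j=1}^i\big(\operatorname{tr}[x^{i+1}_{j+1}(x^i_j)^{-1}]+\operatorname{tr}[x^i_j(x^{i+1}_j)^{-1}]\big)$. *)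

theory Defs
  imports "HOL-Analysis.Analysis"
begin

type_synonym 'd sqmat = "real^'d^'d"

definition posdef :: "'d::finite sqmat \<Rightarrow> bool" where
  "posdef A \<longleftrightarrow> transpose A = A \<and> (\<forall>v. v \<noteq> 0 \<longrightarrow> v \<bullet> (A *v v) > 0)"

definition symm :: "'d::finite sqmat \<Rightarrow> bool" where
  "symm A \<longleftrightarrow> transpose A = A"

text \<open>Triangular arrays are functions x i j, meaningful for 1 <= j <= i <= N.\<close>

definition Phi :: "nat \<Rightarrow> (nat \<Rightarrow> nat \<Rightarrow> 'd::finite sqmat) \<Rightarrow> real" where
  "Phi N x = (\<Sum>i=1..N-1. \<Sum>j=1..i.
      trace (x (i+1) (j+1) ** matrix_inv (x i j)) + trace (x i j ** matrix_inv (x (i+1) j)))"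

fun mprod :: "(nat \<Rightarrow> 'd::finite sqmat) \<Rightarrow> nat \<Rightarrow> 'd sqmat" where
  "mprod a 0 = mat 1"
| "mprod a (Suc k) = mprod a k ** a (Suc k)"

definition array_with_row :: "nat \<Rightarrow> (nat \<Rightarrow> 'd::finite sqmat) \<Rightarrow> (nat \<Rightarrow> nat \<Rightarrow> 'd sqmat) \<Rightarrow> bool" where
  "array_with_row N z x \<longleftrightarrow>
     (\<forall>i j. 1 \<le> j \<and> j \<le> i \<and> i \<le> N \<longrightarrow> posdef (x i j)) \<and>
     (\<forall>j. 1 \<le> j \<and> j \<le> N \<longrightarrow> x N j = z j)"

text \<open>Critical point of Phi^N in the free variables x^i_j, 1 <= j <= i <= N-1, each ranging
  over the open set P_d of the space of symmetric matrices: the derivative of Phi^N at x vanishes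
  in every direction H (a family of symmetric matrices at the free positions).\<close>
definition critical_point :: "nat \<Rightarrow> (nat \<Rightarrow> nat \<Rightarrow> 'd::finite sqmat) \<Rightarrow> bool" where
  "critical_point N x \<longleftrightarrow>
     (\<forall>H :: nat \<Rightarrow> nat \<Rightarrow> 'd sqmat.
        (\<forall>i j. 1 \<le> j \<and> j \<le> i \<and> i \<le> N - 1 \<longrightarrow> symm (H i j)) \<longrightarrow>
        ((\<lambda>t. Phi N (\<lambda>i j. if 1 \<le> j \<and> j \<le> i \<and> i \<le> N - 1 then x i j + t *\<^sub>R H i j else x i j))
           has_real_derivative 0) (at 0))"

end

theory Submission
  imports Defs
begin

text \<open>At a critical point the gradient of Phi^N with respect to each free entry vanishes,
  i.e. (x^{i-1}_{j-1})^{-1} + (x^{i+1}_j)^{-1} = (x^i_j)^{-1} (x^{i+1}_{j+1} + x^{i-1}_j) (x^i_j)^{-1},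
  where entries outside the triangle are omitted. Taking determinants and using
  |A^{-1} + B^{-1}| = |A + B| / (|A| |B|), the product of these identities along row i telescopes
  to p_i^2 = p_{i+1} p_{i-1}. Since p_0 = 1 (empty product), the sequence is geometric,
  p_i = p_1^i, which is the claim.\<close>

lemma matrix_inv_right:
  fixes A :: "real^'n::finite^'n"
  assumes "invertible A"
  shows "A ** matrix_inv A = mat 1"
  using someI_ex[OF assms[unfolded invertible_def]] unfolding matrix_inv_def by auto

lemma matrix_inv_left:
  fixes A :: "real^'n::finite^'n"
  assumes "invertible A"
  shows "matrix_inv A ** A = mat 1"
  using someI_ex[OF assms[unfolded invertible_def]] unfolding matrix_inv_def by auto

lemma matrix_inv_unique:
  fixes A B :: "real^'n::finite^'n"
  assumes "A ** B = mat 1"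
  shows "matrix_inv A = B"
proof -
  have "invertible A" using assms invertible_right_inverse by blast
  have "matrix_inv A = matrix_inv A ** (A ** B)" using assms by simp
  also have "\<dots> = B" by (simp add: matrix_mul_assoc matrix_inv_left[OF \<open>invertible A\<close>])
  finally show ?thesis .
qed

lemma det_matrix_inv:
  fixes A :: "real^'n::finite^'n"
  assumes "invertible A"
  shows "det (matrix_inv A) = 1 / det A"
proof -
  have "det A * det (matrix_inv A) = 1"
    using det_mul[of A "matrix_inv A"] by (simp add: matrix_inv_right[OF assms] det_I)
  then show ?thesis by (metis mult.commute mult_zero_left nonzero_eq_divide_eq zero_neq_one)
qed

lemma transpose_matrix_inv:
  fixes A :: "real^'n::finite^'n"
  assumes "invertible A"
  shows "transpose (matrix_inv A) = matrix_inv (transpose A)"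
proof -
  have "transpose A ** transpose (matrix_inv A) = mat 1"
    by (metis matrix_transpose_mul matrix_inv_left[OF assms] transpose_mat)
  then show ?thesis by (metis matrix_inv_unique)
qed

lemma matrix_add_rdistrib:
  "((A::real^'n::finite^'m) + B) ** (C::real^'p^'n) = A ** C + B ** C"
  by (simp add: matrix_matrix_mult_def vec_eq_iff sum.distrib[symmetric] distrib_right)

lemma matrix_diff_rdistrib:
  "((A::real^'n::finite^'m) - B) ** (C::real^'p^'n) = A ** C - B ** C"
  by (simp add: matrix_matrix_mult_def vec_eq_iff sum_subtractf[symmetric] left_diff_distrib)

lemma matrix_diff_ldistrib:
  "(A::real^'n::finite^'m) ** ((B::real^'p^'n) - C) = A ** B - A ** C"
  by (simp add: matrix_matrix_mult_def vec_eq_iff sum_subtractf[symmetric] right_diff_distrib)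

lemma matrix_inv_diff:
  fixes P Q :: "real^'n::finite^'n"
  assumes "invertible P" "invertible Q"
  shows "matrix_inv P - matrix_inv Q = matrix_inv P ** (Q - P) ** matrix_inv Q"
  by (simp add: matrix_diff_ldistrib matrix_diff_rdistrib matrix_mul_assoc[symmetric]
      matrix_inv_right[OF assms(2)] matrix_inv_left[OF assms(1)])

lemma det_matrix_inv_add:
  fixes A B :: "real^'n::finite^'n"
  assumes "invertible A" "invertible B"
  shows "det (matrix_inv B + matrix_inv A) = det (A + B) / (det A * det B)"
proof -
  have "matrix_inv B + matrix_inv A = matrix_inv A ** (A + B) ** matrix_inv B"
    by (simp add: matrix_add_ldistrib matrix_add_rdistrib matrix_mul_assoc[symmetric]
        matrix_inv_left[OF assms(1)] matrix_inv_right[OF assms(2)])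
  then show ?thesis by (simp add: det_mul det_matrix_inv assms)
qed

lemma matrix_inv_cramer:
  fixes A :: "real^'n::finite^'n"
  assumes "det A \<noteq> 0"
  shows "matrix_inv A $ i $ k = det (\<chi> r c. if c = i then (if r = k then 1 else 0) else A $ r $ c) / det A"
proof -
  have inv: "invertible A" using assms invertible_det_nz by blast
  have ax: "(axis k 1 :: real^'n) $ r = (if r = k then 1 else 0)" for r
    by (simp add: axis_def)
  have "A *v (matrix_inv A *v axis k 1) = axis k 1"
    by (simp add: matrix_vector_mul_assoc matrix_inv_right[OF inv])
  then have "matrix_inv A *v axis k 1 =
      (\<chi> k'. det (\<chi> r c. if c = k' then (axis k 1::real^'n) $ r else A $ r $ c) / det A)"
    using cramer[OF assms] by blast
  moreover have "(matrix_inv A *v axis k 1) $ i = matrix_inv A $ i $ k"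
    by (simp add: matrix_vector_mult_basis column_def)
  ultimately show ?thesis by (simp only: ax) simp
qed

lemma trace_scaleR: "trace (c *\<^sub>R (A::real^'n::finite^'n)) = c * trace A"
  by (simp add: trace_def sum_distrib_left)

lemma trace_matrix_mult: "trace ((A::real^'n::finite^'n) ** B) = (\<Sum>i\<in>UNIV. \<Sum>k\<in>UNIV. A$i$k * B$k$i)"
  by (simp add: trace_def matrix_matrix_mult_def)

lemma symmetric_trace_square_eq_0:
  fixes E :: "real^'n::finite^'n"
  assumes "transpose E = E" "trace (E ** E) = 0"
  shows "E = 0"
proof -
  have "E $ k $ i = E $ i $ k" for i k
    using assms(1) by (metis transpose_def vec_lambda_beta)
  then have "(\<Sum>i\<in>UNIV. \<Sum>k\<in>UNIV. (E $ i $ k)^2) = 0"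
    using assms(2) unfolding trace_matrix_mult by (simp add: power2_eq_square)
  then have "\<forall>i k. (E $ i $ k)^2 = 0"
    by (simp add: sum_nonneg_eq_0_iff sum_nonneg)
  then show ?thesis by (simp add: vec_eq_iff)
qed

lemma det_mprod: "det (mprod a k) = (\<Prod>j=1..k. det (a j))"
  by (induction k) (auto simp: det_mul det_I)

lemma transpose_add: "transpose ((A::real^'n::finite^'m) + B) = transpose A + transpose B"
  by (simp add: transpose_def vec_eq_iff)

lemma transpose_diff: "transpose ((A::real^'n::finite^'m) - B) = transpose A - transpose B"
  by (simp add: transpose_def vec_eq_iff)

lemma transpose_zero: "transpose (0::real^'n::finite^'m) = 0"
  by (simp add: transpose_def vec_eq_iff)

lemma prod_telescope:
  fixes f g m :: "nat \<Rightarrow> 'a::comm_semiring_1"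
  assumes "\<And>j. 1 \<le> j \<Longrightarrow> j \<le> n \<Longrightarrow> f j * m j = m (Suc j) * g j"
  shows "(\<Prod>j=1..n. f j) * m 1 = m (Suc n) * (\<Prod>j=1..n. g j)"
  using assms
proof (induction n)
  case (Suc n)
  have IH: "(\<Prod>j=1..n. f j) * m 1 = m (Suc n) * (\<Prod>j=1..n. g j)"
    using Suc by simp
  have step: "f (Suc n) * m (Suc n) = m (Suc (Suc n)) * g (Suc n)"
    using Suc.prems by simp
  have "(\<Prod>j=1..Suc n. f j) * m 1 = f (Suc n) * ((\<Prod>j=1..n. f j) * m 1)"
    by (simp add: mult_ac)
  also have "\<dots> = (f (Suc n) * m (Suc n)) * (\<Prod>j=1..n. g j)"
    by (simp only: IH mult.assoc)
  also have "\<dots> = m (Suc (Suc n)) * (\<Prod>j=1..Suc n. g j)"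
    by (simp only: step) (simp add: mult_ac)
  finally show ?case .
qed simp

lemma geometric_if_square_eq_mult_neighbours:
  fixes q :: "nat \<Rightarrow> 'a::field"
  assumes "q 0 = 1"
    and nonzero: "\<And>r. r < n \<Longrightarrow> q r \<noteq> 0"
    and square: "\<And>i. 1 \<le> i \<Longrightarrow> i < n \<Longrightarrow> q i ^ 2 = q (Suc i) * q (i - 1)"
    and "r \<le> n"
  shows "q r = q 1 ^ r"
proof -
  have ratio: "q (Suc r) = q 1 * q r" if "r < n" for r
    using that
  proof (induction r)
    case 0
    then show ?case using \<open>q 0 = 1\<close> by simp
  next
    case (Suc r)
    have "q (Suc (Suc r)) * q r = q (Suc r) * q (Suc r)"
      using square[of "Suc r"] Suc.prems by (simp add: power2_eq_square)
    also have "\<dots> = q 1 * q (Suc r) * q r"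
      using Suc by (simp add: mult_ac)
    moreover have "q r \<noteq> 0"
      using nonzero Suc.prems by simp
    ultimately show ?case
      by (metis mult_cancel_right)
  qed
  show ?thesis
    using \<open>r \<le> n\<close>
  proof (induction r)
    case (Suc r)
    then show ?case using ratio[of r] by simp
  qed (simp add: \<open>q 0 = 1\<close>)
qed

lemma tendsto_det:
  fixes M :: "'a \<Rightarrow> real^'n::finite^'n"
  assumes "\<And>i j. ((\<lambda>t. M t $ i $ j) \<longlongrightarrow> L $ i $ j) F"
  shows "((\<lambda>t. det (M t)) \<longlongrightarrow> det L) F"
  unfolding det_def by (intro tendsto_intros assms)

lemma tendsto_matrix_inv_entry:
  fixes M :: "'a \<Rightarrow> real^'n::finite^'n"
  assumes lim: "\<And>i j. ((\<lambda>t. M t $ i $ j) \<longlongrightarrow> L $ i $ j) F" and "det L \<noteq> 0"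
  shows "((\<lambda>t. matrix_inv (M t) $ i $ k) \<longlongrightarrow> matrix_inv L $ i $ k) F"
proof -
  define minor where "minor A = det (\<chi> r c. if c = i then (if r = k then 1 else 0) else A $ r $ c)"
    for A :: "real^'n^'n"
  have det_lim: "((\<lambda>t. det (M t)) \<longlongrightarrow> det L) F"
    using lim by (rule tendsto_det)
  have minor_lim: "((\<lambda>t. minor (M t)) \<longlongrightarrow> minor L) F"
    unfolding minor_def
  proof (rule tendsto_det)
    fix r c
    show "((\<lambda>t. (\<chi> r c. if c = i then (if r = k then 1 else 0) else M t $ r $ c) $ r $ c) \<longlongrightarrow>
        (\<chi> r c. if c = i then (if r = k then 1 else 0) else L $ r $ c) $ r $ c) F"
      using lim by (cases "c = i") auto
  qed
  have "((\<lambda>t. minor (M t) / det (M t)) \<longlongrightarrow> matrix_inv L $ i $ k) F"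
    unfolding matrix_inv_cramer[OF \<open>det L \<noteq> 0\<close>] minor_def[symmetric]
    by (intro tendsto_divide minor_lim det_lim \<open>det L \<noteq> 0\<close>)
  moreover have "eventually (\<lambda>t. minor (M t) / det (M t) = matrix_inv (M t) $ i $ k) F"
    using tendsto_imp_eventually_ne[OF det_lim \<open>det L \<noteq> 0\<close>]
    by eventually_elim (simp add: matrix_inv_cramer minor_def)
  ultimately show ?thesis by (rule Lim_transform_eventually)
qed

lemma trace_mult_matrix_inv_difference_quotient:
  fixes A B C D :: "real^'n::finite^'n"
  assumes "invertible C" "invertible (C + h *\<^sub>R D)" "h \<noteq> 0"
  defines "M \<equiv> matrix_inv (C + h *\<^sub>R D)"
  shows "(trace ((A + h *\<^sub>R B) ** M) - trace (A ** matrix_inv C)) / h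
    = trace (B ** M) - trace ((D ** matrix_inv C ** A) ** M)"
proof -
  define Z where "Z = matrix_inv C"
  have "M - Z = M ** (C - (C + h *\<^sub>R D)) ** Z"
    unfolding M_def Z_def using assms by (intro matrix_inv_diff)
  also have "\<dots> = M ** ((- h) *\<^sub>R D) ** Z"
    by simp
  also have "\<dots> = (- h) *\<^sub>R (M ** D ** Z)"
    by (simp only: matrix_scalar_ac scalar_matrix_assoc[symmetric])
  finally have "trace (A ** M) - trace (A ** Z) = - h * trace (A ** (M ** D ** Z))"
    by (simp only: trace_sub[symmetric] matrix_diff_ldistrib[symmetric] matrix_scalar_ac
        scalar_matrix_assoc[symmetric] trace_scaleR)
  also have "trace (A ** (M ** D ** Z)) = trace (M ** D ** Z ** A)"
    by (rule trace_mul_sym)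
  also have "\<dots> = trace (M ** (D ** Z ** A))"
    by (simp add: matrix_mul_assoc)
  also have "\<dots> = trace ((D ** Z ** A) ** M)"
    by (rule trace_mul_sym)
  finally have "trace (A ** M) - trace (A ** Z) = - h * trace ((D ** Z ** A) ** M)" .
  moreover have "trace ((A + h *\<^sub>R B) ** M) = trace (A ** M) + h * trace (B ** M)"
    by (simp add: matrix_add_rdistrib trace_add trace_scaleR scalar_matrix_assoc[symmetric])
  ultimately show ?thesis
    using assms(3) by (simp add: Z_def field_simps)
qed

lemma has_real_derivative_trace_mult_matrix_inv:
  fixes A B C D :: "real^'n::finite^'n"
  assumes "det C \<noteq> 0"
  shows "((\<lambda>t. trace ((A + t *\<^sub>R B) ** matrix_inv (C + t *\<^sub>R D))) has_real_derivative
     trace (B ** matrix_inv C) - trace (D ** matrix_inv C ** A ** matrix_inv C)) (at 0)"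
proof -
  define M where "M t = matrix_inv (C + t *\<^sub>R D)" for t :: real
  define Z where "Z = matrix_inv C"
  have det_lim: "((\<lambda>t. det (C + t *\<^sub>R D)) \<longlongrightarrow> det C) (at 0)"
    by (rule tendsto_det) (auto intro!: tendsto_eq_intros)
  have trace_lim: "((\<lambda>t. trace (X ** M t)) \<longlongrightarrow> trace (X ** Z)) (at 0)" for X
  proof -
    have "((\<lambda>t. M t $ i $ k) \<longlongrightarrow> Z $ i $ k) (at 0)" for i k
      unfolding M_def Z_def
      by (rule tendsto_matrix_inv_entry[OF _ assms]) (auto intro!: tendsto_eq_intros)
    then show ?thesis
      unfolding trace_matrix_mult by (intro tendsto_sum tendsto_mult tendsto_const)
  qed
  have "((\<lambda>h. trace (B ** M h) - trace ((D ** Z ** A) ** M h)) \<longlongrightarrow>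
      trace (B ** Z) - trace (D ** Z ** A ** Z)) (at 0)"
    by (intro tendsto_diff trace_lim)
  moreover have "eventually (\<lambda>h. trace (B ** M h) - trace ((D ** Z ** A) ** M h) =
      (trace ((A + h *\<^sub>R B) ** M h) - trace ((A + 0 *\<^sub>R B) ** M 0)) / (h - 0)) (at 0)"
    using tendsto_imp_eventually_ne[OF det_lim assms] eventually_neq_at_within[of 0 0]
  proof eventually_elim
    case (elim h)
    then show ?case
      using trace_mult_matrix_inv_difference_quotient[of C h D A B] assms
      by (simp add: M_def Z_def invertible_det_nz)
  qed
  ultimately show ?thesis
    unfolding has_field_derivative_iff M_def Z_def by (rule Lim_transform_eventually)
qed

lemma det_nonzero_if_quadratic_form_pos:
  fixes P :: "real^'n::finite^'n"
  assumes "\<And>v. v \<noteq> 0 \<Longrightarrow> v \<bullet> (P *v v) > 0"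
  shows "det P \<noteq> 0"
proof
  assume "det P = 0"
  then have "\<not> inj ((*v) P)"
    using invertible_det_nz invertible_left_inverse matrix_left_invertible_injective by metis
  then obtain u w where "u \<noteq> w" "P *v u = P *v w"
    unfolding inj_def by blast
  then have "P *v (u - w) = 0" "u - w \<noteq> 0"
    by (simp_all add: matrix_vector_mult_diff_distrib)
  with assms[of "u - w"] show False by simp
qed

lemma posdef_det_nonzero: "posdef (P::real^'n::finite^'n) \<Longrightarrow> det P \<noteq> 0"
  unfolding posdef_def by (rule det_nonzero_if_quadratic_form_pos) blast

lemma posdef_invertible: "posdef (P::real^'n::finite^'n) \<Longrightarrow> invertible P"
  using posdef_det_nonzero invertible_det_nz by blast

lemma transpose_matrix_inv_posdef:
  assumes "posdef (P::real^'n::finite^'n)"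
  shows "transpose (matrix_inv P) = matrix_inv P"
  using transpose_matrix_inv[OF posdef_invertible[OF assms]] assms unfolding posdef_def by simp

text \<open>The determinant cannot vanish along the segment from the identity to a positive definite
  matrix, so by the intermediate value theorem it keeps the sign it has at the identity.\<close>
lemma posdef_det_pos:
  fixes A :: "real^'n::finite^'n"
  assumes "posdef A"
  shows "det A > 0"
proof (rule ccontr)
  assume "\<not> det A > 0"
  define f where "f s = det ((1 - s) *\<^sub>R mat 1 + s *\<^sub>R A)" for s :: real
  have "continuous_on {0..1} f"
    unfolding f_def det_def by (simp, intro continuous_intros)
  moreover have "f 1 \<le> 0" "0 \<le> f 0"
    using \<open>\<not> det A > 0\<close> by (simp_all add: f_def det_I)
  ultimately obtain s where s: "0 \<le> s" "s \<le> 1" "f s = 0"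
    using IVT2'[of f 1 0 0] by auto
  have "v \<bullet> (((1 - s) *\<^sub>R mat 1 + s *\<^sub>R A) *v v) > 0" if "v \<noteq> 0" for v
  proof -
    have "v \<bullet> (((1 - s) *\<^sub>R mat 1 + s *\<^sub>R A) *v v) = (1 - s) * (v \<bullet> v) + s * (v \<bullet> (A *v v))"
      by (simp add: matrix_vector_mult_add_rdistrib inner_add_right
          scaleR_matrix_vector_assoc[symmetric])
    moreover have "v \<bullet> v > 0" "v \<bullet> (A *v v) > 0"
      using assms that unfolding posdef_def by auto
    ultimately show ?thesis
      using s by (cases "s = 0") (auto intro: add_nonneg_pos)
  qed
  then show False
    using det_nonzero_if_quadratic_form_pos s(3) unfolding f_def by blast
qed

definition Phi_directional_derivative ::
    "nat \<Rightarrow> (nat \<Rightarrow> nat \<Rightarrow> 'd::finite sqmat) \<Rightarrow> (nat \<Rightarrow> nat \<Rightarrow> 'd sqmat) \<Rightarrow> real" where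
  "Phi_directional_derivative N x K = (\<Sum>i=1..N-1. \<Sum>j=1..i.
      (trace (K (i+1) (j+1) ** matrix_inv (x i j))
        - trace (K i j ** matrix_inv (x i j) ** x (i+1) (j+1) ** matrix_inv (x i j)))
    + (trace (K i j ** matrix_inv (x (i+1) j))
        - trace (K (i+1) j ** matrix_inv (x (i+1) j) ** x i j ** matrix_inv (x (i+1) j))))"

lemma Phi_has_real_derivative:
  fixes x K :: "nat \<Rightarrow> nat \<Rightarrow> 'd::finite sqmat"
  assumes "\<And>i j. 1 \<le> j \<Longrightarrow> j \<le> i \<Longrightarrow> i \<le> N \<Longrightarrow> det (x i j) \<noteq> 0"
  shows "((\<lambda>t. Phi N (\<lambda>i j. x i j + t *\<^sub>R K i j)) has_real_derivative
    Phi_directional_derivative N x K) (at 0)"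
  unfolding Phi_def Phi_directional_derivative_def
  by (intro DERIV_sum DERIV_add has_real_derivative_trace_mult_matrix_inv assms) auto

lemma sum_triangle_delta:
  fixes M a b :: nat
  shows "(\<Sum>i=1..M. \<Sum>j=1..i. if i = a \<and> j = b then f i j else 0) =
     (if 1 \<le> b \<and> b \<le> a \<and> a \<le> M then f a b else (0::'a::comm_monoid_add))"
proof -
  have "(\<Sum>j=1..i. if i = a \<and> j = b then f i j else 0) =
      (if i = a then (if 1 \<le> b \<and> b \<le> a then f a b else 0) else 0)" for i
    using sum.delta[OF finite_atLeastAtMost, of b "f a" 1 a] by (cases "i = a") auto
  then show ?thesis by (simp add: sum.delta')
qed

text \<open>Paired with a direction E through trace (E ** _). At the boundary of the triangle
  (j = 1, resp. j = i) the neighbour x^{i-1}_{j-1}, resp. x^{i-1}_j, does not exist and its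
  term is dropped.\<close>
definition Phi_gradient :: "(nat \<Rightarrow> nat \<Rightarrow> 'd::finite sqmat) \<Rightarrow> nat \<Rightarrow> nat \<Rightarrow> 'd sqmat" where
  "Phi_gradient x i j =
     (if 2 \<le> j then matrix_inv (x (i-1) (j-1)) else 0) + matrix_inv (x (i+1) j)
     - matrix_inv (x i j) ** (x (i+1) (j+1) + (if j \<le> i - 1 then x (i-1) j else 0))
         ** matrix_inv (x i j)"

lemma Phi_directional_derivative_single_entry:
  fixes x :: "nat \<Rightarrow> nat \<Rightarrow> 'd::finite sqmat"
  assumes "1 \<le> j0" "j0 \<le> i0" "i0 \<le> N - 1"
  shows "Phi_directional_derivative N x (\<lambda>i j. if i = i0 \<and> j = j0 then E else 0)
    = trace (E ** Phi_gradient x i0 j0)"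
proof -
  define K where "K i j = (if i = i0 \<and> j = j0 then E else 0)" for i j
  define Xi where "Xi = matrix_inv (x i0 j0)"
  have trace_K: "trace (K p q ** Y) = (if p = i0 \<and> q = j0 then trace (E ** Y) else 0)" for p q Y
    by (simp add: K_def trace_def)
  have S1: "(\<Sum>i=1..N-1. \<Sum>j=1..i. trace (K (i+1) (j+1) ** matrix_inv (x i j)))
      = trace (E ** (if 2 \<le> j0 then matrix_inv (x (i0-1) (j0-1)) else 0))"
  proof -
    have "(\<Sum>i=1..N-1. \<Sum>j=1..i. trace (K (i+1) (j+1) ** matrix_inv (x i j))) =
        (\<Sum>i=1..N-1. \<Sum>j=1..i. if i = i0-1 \<and> j = j0-1 then trace (E ** matrix_inv (x i j)) else 0)"
      unfolding trace_K by (intro sum.cong) auto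
    also have "\<dots> = trace (E ** (if 2 \<le> j0 then matrix_inv (x (i0-1) (j0-1)) else 0))"
      unfolding sum_triangle_delta using assms by (auto simp: trace_def)
    finally show ?thesis .
  qed
  have S2: "(\<Sum>i=1..N-1. \<Sum>j=1..i. trace (K i j ** matrix_inv (x i j) ** x (i+1) (j+1) ** matrix_inv (x i j)))
      = trace (E ** Xi ** x (i0+1) (j0+1) ** Xi)"
    using assms unfolding trace_K matrix_mul_assoc[symmetric] sum_triangle_delta Xi_def by simp
  have S3: "(\<Sum>i=1..N-1. \<Sum>j=1..i. trace (K i j ** matrix_inv (x (i+1) j)))
      = trace (E ** matrix_inv (x (i0+1) j0))"
    using assms unfolding trace_K sum_triangle_delta by simp
  have S4: "(\<Sum>i=1..N-1. \<Sum>j=1..i. trace (K (i+1) j ** matrix_inv (x (i+1) j) ** x i j ** matrix_inv (x (i+1) j)))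
      = trace (E ** Xi ** (if j0 \<le> i0 - 1 then x (i0-1) j0 else 0) ** Xi)"
  proof -
    have "(\<Sum>i=1..N-1. \<Sum>j=1..i. trace (K (i+1) j ** matrix_inv (x (i+1) j) ** x i j ** matrix_inv (x (i+1) j)))
      = (\<Sum>i=1..N-1. \<Sum>j=1..i. if i = i0-1 \<and> j = j0
          then trace (E ** matrix_inv (x (i+1) j) ** x i j ** matrix_inv (x (i+1) j)) else 0)"
      unfolding matrix_mul_assoc[symmetric] trace_K by (intro sum.cong) auto
    also have "\<dots> = trace (E ** Xi ** (if j0 \<le> i0 - 1 then x (i0-1) j0 else 0) ** Xi)"
      unfolding sum_triangle_delta using assms by (simp add: trace_def Xi_def)
    finally show ?thesis .
  qed
  have "Phi_directional_derivative N x K = trace (E ** (if 2 \<le> j0 then matrix_inv (x (i0-1) (j0-1)) else 0))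
      - trace (E ** Xi ** x (i0+1) (j0+1) ** Xi) + trace (E ** matrix_inv (x (i0+1) j0))
      - trace (E ** Xi ** (if j0 \<le> i0 - 1 then x (i0-1) j0 else 0) ** Xi)"
    unfolding Phi_directional_derivative_def S1[symmetric] S2[symmetric] S3[symmetric] S4[symmetric]
    by (simp add: sum.distrib sum_subtractf)
  also have "\<dots> = trace (E ** Phi_gradient x i0 j0)"
    by (simp add: Phi_gradient_def Xi_def matrix_add_ldistrib matrix_diff_ldistrib
        matrix_add_rdistrib matrix_mul_assoc trace_add trace_sub)
  finally show ?thesis unfolding K_def .
qed

lemma transpose_Phi_gradient:
  fixes x :: "nat \<Rightarrow> nat \<Rightarrow> 'd::finite sqmat"
  assumes pd: "\<And>i j. 1 \<le> j \<Longrightarrow> j \<le> i \<Longrightarrow> i \<le> N \<Longrightarrow> posdef (x i j)"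
    and "1 \<le> j0" "j0 \<le> i0" "i0 \<le> N - 1"
  shows "transpose (Phi_gradient x i0 j0) = Phi_gradient x i0 j0"
proof -
  have sym: "transpose (x i j) = x i j" and sym_inv: "transpose (matrix_inv (x i j)) = matrix_inv (x i j)"
    if "1 \<le> j" "j \<le> i" "i \<le> N" for i j
    using pd[OF that] transpose_matrix_inv_posdef unfolding posdef_def by auto
  show ?thesis
    unfolding Phi_gradient_def using assms(2-4)
    by (simp add: transpose_add transpose_diff transpose_zero matrix_transpose_mul
        matrix_mul_assoc sym sym_inv)
qed

lemma critical_point_Phi_gradient_eq_0:
  fixes x :: "nat \<Rightarrow> nat \<Rightarrow> 'd::finite sqmat"
  assumes pd: "\<And>i j. 1 \<le> j \<Longrightarrow> j \<le> i \<Longrightarrow> i \<le> N \<Longrightarrow> posdef (x i j)"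
    and crit: "critical_point N x"
    and ij: "1 \<le> j0" "j0 \<le> i0" "i0 \<le> N - 1"
  shows "Phi_gradient x i0 j0 = 0"
proof -
  define G where "G = Phi_gradient x i0 j0"
  define H where "H i j = (if i = i0 \<and> j = j0 then G else 0)" for i j
  \<comment> \<open>The gradient is symmetric, hence itself an admissible direction.\<close>
  have "transpose G = G"
    unfolding G_def using transpose_Phi_gradient[OF pd ij] .
  then have "\<forall>i j. 1 \<le> j \<and> j \<le> i \<and> i \<le> N - 1 \<longrightarrow> symm (H i j)"
    by (simp add: H_def symm_def transpose_zero)
  then have "((\<lambda>t. Phi N (\<lambda>i j. if 1 \<le> j \<and> j \<le> i \<and> i \<le> N - 1 then x i j + t *\<^sub>R H i j
      else x i j)) has_real_derivative 0) (at 0)"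
    using crit unfolding critical_point_def by blast
  moreover have "(\<lambda>i j. if 1 \<le> j \<and> j \<le> i \<and> i \<le> N - 1 then x i j + t *\<^sub>R H i j else x i j)
      = (\<lambda>i j. x i j + t *\<^sub>R H i j)" for t
    using ij by (intro ext) (auto simp: H_def)
  ultimately have deriv_0: "((\<lambda>t. Phi N (\<lambda>i j. x i j + t *\<^sub>R H i j)) has_real_derivative 0) (at 0)"
    by (simp only:)
  have dets: "det (x i j) \<noteq> 0" if "1 \<le> j" "j \<le> i" "i \<le> N" for i j
    using pd[OF that] by (rule posdef_det_nonzero)
  have "Phi_directional_derivative N x H = trace (G ** G)"
    unfolding H_def G_def by (rule Phi_directional_derivative_single_entry[OF ij])
  then have "((\<lambda>t. Phi N (\<lambda>i j. x i j + t *\<^sub>R H i j)) has_real_derivative trace (G ** G)) (at 0)"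
    using Phi_has_real_derivative[of N x H, OF dets] by (simp only:)
  then have "trace (G ** G) = 0"
    using DERIV_unique[OF deriv_0] by simp
  with \<open>transpose G = G\<close> show ?thesis
    unfolding G_def by (rule symmetric_trace_square_eq_0)
qed

lemma critical_point_det_eq:
  fixes x :: "nat \<Rightarrow> nat \<Rightarrow> 'd::finite sqmat"
  assumes pd: "\<And>i j. 1 \<le> j \<Longrightarrow> j \<le> i \<Longrightarrow> i \<le> N \<Longrightarrow> posdef (x i j)"
    and crit: "critical_point N x"
    and ij: "1 \<le> j0" "j0 \<le> i0" "i0 \<le> N - 1"
  shows "det (x i0 j0) ^ 2 *
      det ((if 2 \<le> j0 then matrix_inv (x (i0-1) (j0-1)) else 0) + matrix_inv (x (i0+1) j0))
    = det (x (i0+1) (j0+1) + (if j0 \<le> i0 - 1 then x (i0-1) j0 else 0))"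
proof -
  define X where "X = x i0 j0"
  define L where "L = (if 2 \<le> j0 then matrix_inv (x (i0-1) (j0-1)) else 0) + matrix_inv (x (i0+1) j0)"
  define T where "T = x (i0+1) (j0+1) + (if j0 \<le> i0 - 1 then x (i0-1) j0 else 0)"
  have "invertible X"
    unfolding X_def using ij by (intro posdef_invertible pd) auto
  have "L = matrix_inv X ** T ** matrix_inv X"
    using critical_point_Phi_gradient_eq_0[OF pd crit ij]
    unfolding Phi_gradient_def L_def T_def X_def by simp
  then have "X ** L ** X = T"
    by (simp add: matrix_mul_assoc matrix_inv_right[OF \<open>invertible X\<close>])
      (simp add: matrix_mul_assoc[symmetric] matrix_inv_left[OF \<open>invertible X\<close>])
  then show ?thesis
    unfolding X_def[symmetric] L_def[symmetric] T_def[symmetric]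
    by (metis det_mul mult.commute mult.left_commute power2_eq_square)
qed

lemma critical_point_row_det_prod:
  fixes x :: "nat \<Rightarrow> nat \<Rightarrow> 'd::finite sqmat"
  assumes pd: "\<And>i j. 1 \<le> j \<Longrightarrow> j \<le> i \<Longrightarrow> i \<le> N \<Longrightarrow> posdef (x i j)"
    and crit: "critical_point N x"
    and i: "1 \<le> i" "i \<le> N - 1"
  shows "(\<Prod>j=1..i. det (x i j)) ^ 2 = (\<Prod>j=1..i+1. det (x (i+1) j)) * (\<Prod>j=1..i-1. det (x (i-1) j))"
proof -
  define a where "a j = det (x (i+1) j)" for j
  define b where "b j = det (x (i-1) j)" for j
  \<comment> \<open>m j is the determinant |x^{i+1}_j + x^{i-1}_{j-1}| that the j-th and (j-1)-st gradient
    identities share, so it cancels in their product.\<close>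
  define m where "m j = (if j = 1 then 1 else det (x (i+1) j + (if j \<le> i then x (i-1) (j-1) else 0)))" for j
  define g where "g j = a j * (if j = 1 then 1 else b (j-1))" for j
  have pos: "det (x p q) > 0" and inv: "invertible (x p q)" if "1 \<le> q" "q \<le> p" "p \<le> N" for p q
    using pd[OF that] posdef_det_pos posdef_invertible by auto
  have "det (x i j) ^ 2 * m j = m (Suc j) * g j" if j: "1 \<le> j" "j \<le> i" for j
  proof (cases "j = 1")
    case True
    have "det (x i 1) ^ 2 * (1 / a 1) = m (Suc 1)"
      using critical_point_det_eq[OF pd crit, of 1 i] i inv[of 1 "i+1"]
      by (auto simp: det_matrix_inv m_def a_def numeral_2_eq_2)
    moreover have "a 1 > 0" unfolding a_def using i by (intro pos) auto
    ultimately show ?thesis using True by (simp add: g_def m_def field_simps)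
  next
    case False
    have "j \<le> i - 1 \<longleftrightarrow> Suc j \<le> i"
      using j by auto
    then have "det (x i j) ^ 2 * (m j / (a j * b (j-1))) = m (Suc j)"
      using critical_point_det_eq[OF pd crit, of j i] det_matrix_inv_add[of "x (i+1) j" "x (i-1) (j-1)"]
        i j False inv[of j "i+1"] inv[of "j-1" "i-1"]
      by (simp add: m_def a_def b_def)
    moreover have "a j > 0" "b (j-1) > 0"
      unfolding a_def b_def using i j False by (auto intro: pos)
    ultimately show ?thesis using False by (simp add: g_def field_simps)
  qed
  then have "(\<Prod>j=1..i. det (x i j) ^ 2) * m 1 = m (Suc i) * (\<Prod>j=1..i. g j)"
    by (rule prod_telescope)
  moreover have "(\<Prod>j=1..i. if j = 1 then 1 else b (j-1)) = (\<Prod>j=1..i-1. b j)"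
  proof -
    have "(\<Prod>j=1..i. if j = 1 then 1 else b (j-1)) = (\<Prod>j=Suc 1..Suc (i-1). b (j-1))"
      using i by (simp add: prod.atLeast_Suc_atMost)
    then show ?thesis by (simp only: prod.shift_bounds_cl_Suc_ivl) simp
  qed
  ultimately show ?thesis
    using i by (simp add: m_def g_def a_def b_def prod.distrib prod_power_distrib)
qed

theorem mainTheorem9:
  fixes N :: nat and z :: "nat \<Rightarrow> real^'d::finite^'d" and x :: "nat \<Rightarrow> nat \<Rightarrow> real^'d^'d"
  assumes "N \<ge> 2"
    and "\<forall>j. 1 \<le> j \<and> j \<le> N \<longrightarrow> posdef (z j)"
    and "array_with_row N z x"
    and "critical_point N x"
  shows "\<forall>i. 1 \<le> i \<and> i \<le> N \<longrightarrow>
           det (mprod (x i) i) powr (1 / real i) = det (mprod z N) powr (1 / real N)"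
proof -
  have pd: "\<And>i j. 1 \<le> j \<Longrightarrow> j \<le> i \<Longrightarrow> i \<le> N \<Longrightarrow> posdef (x i j)"
    and row_N: "\<And>j. 1 \<le> j \<Longrightarrow> j \<le> N \<Longrightarrow> x N j = z j"
    using assms(3) unfolding array_with_row_def by blast+
  define p where "p i = (\<Prod>j=1..i. det (x i j))" for i
  have p_pos: "p i > 0" if "i \<le> N" for i
    unfolding p_def using that pd posdef_det_pos by (intro prod_pos) auto
  have "p 0 = 1"
    by (simp add: p_def)
  moreover have "p r \<noteq> 0" if "r < N" for r
    using p_pos[of r] that by simp
  moreover have "p i ^ 2 = p (Suc i) * p (i - 1)" if "1 \<le> i" "i < N" for i
    unfolding p_def using critical_point_row_det_prod[OF pd assms(4)] that by simp
  ultimately have p_power: "p i = p 1 ^ i" if "i \<le> N" for i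
    using that by (rule geometric_if_square_eq_mult_neighbours)
  have "det (mprod (x i) i) = p 1 ^ i" if "i \<le> N" for i
    unfolding p_power[OF that, symmetric] by (simp add: det_mprod p_def)
  moreover have "det (mprod z N) = p 1 ^ N"
    unfolding p_power[OF order.refl, symmetric] using row_N by (simp add: det_mprod p_def)
  moreover have "p 1 > 0"
    using p_pos assms(1) by simp
  ultimately show ?thesis
    by (simp add: powr_realpow[symmetric] powr_powr)
qed

end
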